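(* Let $n\ge3$, $l\ge1$, $\mathfrak g=B^{(1)}_n$, $B$ the level-$l$ perfect crystal of the context, $\lambda=l\Lambda_0$, $d=2n-1$, and $i^{(j)}_1=i^{(j)}_{2n-1}=\epsilon(j+1)$, $i^{(j)}_a=i^{(j)}_{2n-a}=a$ for $2\le a\le n$. Then: (II) $B^{(j)}_d=B$ for all $j\ge1$; (III) $\langle\lambda_j,h_{i^{(j)}_a}\rangle\le\varepsilon_{i^{(j)}_a}(b)$ for all $j\ge1$, $1\le a\le d$, $b\in B^{(j)}_{a-1}$; (IV') for all $j\ge1$, $a=1,\dots,d$: $\varepsilon_{i^{(j)}_{a+1}}(b^{(j)}_a)=0$, $\varphi_{i^{(j)}_{a+1}}(b^{(j)}_a)>0$ (with $i^{(j)}_{d+1}:=i^{(j+1)}_1$), and $b^{(j+1)}_0=\tilde f_{i^{(j+1)}_1}^mb^{(j)}_d$ with $m=\langle\lambda_{j+1},h_{i^{(j+1)}_1}\rangle$. Moreover $B^{(j)}_0=\{(0,\dots,0,l)\}$ ($j$ odd), $\{(l,0,\dots,0)\}$ ($j$ even), $B^{(j)}_{2n-1}=B$, and for $1\le a\le n-1$: $B^{(j)}_a$ is the set of $b\in B$ whose coordinates are all $0$ except possibly $x_2,\dots,x_{a+1},\bar x_1$ ($j$ odd), resp. except possibly $x_1,\dots,x_{a+1}$ ($j$ even); $B^{(j)}_{n+a-1}$ is the set of $b\in B$ whose coordinates are all $0$ except possibly $x_2,\dots,x_n,x_0,\bar x_n,\dots,\bar x_{n-a+1},\bar x_1$ ($j$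 odd), resp. except possibly $x_1,\dots,x_n,x_0,\bar x_n,\dots,\bar x_{n-a+1}$ ($j$ even). Also $b^{(j)}_0=(0,\dots,0,l)$ ($j$ odd), $(l,0,\dots,0)$ ($j$ even); $b^{(j)}_{2n-1}=(l,0,\dots,0)$ ($j$ odd), $(0,\dots,0,l)$ ($j$ even); and for $1\le a\le n-1$, $b^{(j)}_a$ has $x_{a+1}=l$ and all other coordinates $0$, and $b^{(j)}_{n+a-1}$ has $\bar x_{n-a+1}=l$ and all other coordinates $0$.
   Context: $\epsilon(i)=0$ for $i$ even and $1$ for $i$ odd; $(x)_+=\max(x,0)$. $B=\{(x_1,\dots,x_n,x_0,\bar x_n,\dots,\bar x_1)\in\mathbb Z^{2n}\times\{0,1\}: x_i,\bar x_i\ge0,\ \sum_{i=1}^n(x_i+\bar x_i)=l\}$ (coordinates written in this order). Crystal structure: $\tilde f_0b=(x_1,x_2+1,\dots,\bar x_2,\bar x_1-1)$ if $x_2\ge\bar x_2$, $(x_1+1,x_2,\dots,\bar x_2-1,\bar x_1)$ if $x_2<\bar x_2$; for $1\le i\le n-1$, $\tilde f_ib$ replaces $(x_i,x_{i+1})$ by $(x_i-1,x_{i+1}+1)$ if $x_{i+1}\ge\bar x_{i+1}$, and $(\bar x_{i+1},\bar x_i)$ by $(\bar x_{i+1}-1,\bar x_i+1)$ if $x_{i+1}<\bar x_{i+1}$; $\tilde f_nb$ replaces $(x_n,x_0)$ by $(x_n-1,x_0+1)$ if $x_0=0$ and $(x_0,\bar x_n)$ by $(x_0-1,\bar x_n+1)$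 if $x_0=1$; $\tilde e_ib=b'$ iff $\tilde f_ib'=b$, and $\tilde f_ib=0$ if the result is not in $B$. $\varphi_0(b)=\bar x_1+(\bar x_2-x_2)_+$, $\varepsilon_0(b)=x_1+(x_2-\bar x_2)_+$; $\varphi_i(b)=x_i+(\bar x_{i+1}-x_{i+1})_+$, $\varepsilon_i(b)=\bar x_i+(x_{i+1}-\bar x_{i+1})_+$ ($1\le i\le n-1$); $\varphi_n(b)=2x_n+x_0$, $\varepsilon_n(b)=2\bar x_n+x_0$. For $\lambda=l\Lambda_0$: $\lambda_j=l\Lambda_{\epsilon(j)}$ and the ground state elements are $\overline b_j=(0,\dots,0,l)$ for $j$ odd, $(l,0,\dots,0)$ for $j$ even; $\langle\lambda_j,h_i\rangle$ is the coefficient of $\Lambda_i$ in $\lambda_j$. Given $d$, $i^{(j)}_a$: $B^{(j)}_0=\{\overline b_j\}$, $B^{(j)}_a=\bigcup_{n\ge0}\tilde f_{i^{(j)}_a}^nB^{(j)}_{a-1}\setminus\{0\}$; $b^{(j)}_0=\overline b_j$, $b^{(j)}_a=\tilde f_{i^{(j)}_a}^{\varphi_{i^{(j)}_a}(b^{(j)}_{a-1})}b^{(j)}_{a-1}$. *)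

theory Defs
  imports Main
begin

text \<open>Elements of the perfect crystal B for B_n^(1):
  (x_1,...,x_n, x_0, xbar_n,...,xbar_1).  xs i = x_i, xbs i = xbar_i (i = 1..n),
  x0 = x_0.  Coordinates outside 1..n are forced to be 0 by membership in B.\<close>
datatype crys = Cr (xs: "nat \<Rightarrow> int") (x0: int) (xbs: "nat \<Rightarrow> int")

definition eps :: "nat \<Rightarrow> nat" where
  "eps i = (if even i then 0 else 1)"

definition pos :: "int \<Rightarrow> int" where
  "pos x = max x 0"

definition Bcrys :: "nat \<Rightarrow> nat \<Rightarrow> crys set" where
  "Bcrys n l = {b. (\<forall>i. xs b i \<ge> 0 \<and> xbs b i \<ge> 0)
      \<and> (\<forall>i. (i = 0 \<or> i > n) \<longrightarrow> xs b i = 0 \<and> xbs b i = 0)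
      \<and> x0 b \<in> {0, 1}
      \<and> (\<Sum>i=1..n. xs b i + xbs b i) + x0 b = int l}"

definition fraw :: "nat \<Rightarrow> nat \<Rightarrow> crys \<Rightarrow> crys" where
  "fraw n i b = (let x = xs b; z = x0 b; y = xbs b in
     if i = 0 then
       (if x 2 \<ge> y 2 then Cr (x(2 := x 2 + 1)) z (y(1 := y 1 - 1))
        else Cr (x(1 := x 1 + 1)) z (y(2 := y 2 - 1)))
     else if i < n then
       (if x (i+1) \<ge> y (i+1) then Cr (x(i := x i - 1, i+1 := x (i+1) + 1)) z y
        else Cr x z (y(i+1 := y (i+1) - 1, i := y i + 1)))
     else
       (if z = 0 then Cr (x(n := x n - 1)) (z + 1) y
        else Cr x (z - 1) (y(n := y n + 1))))"

text \<open>f_i b; None represents 0.\<close>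
definition ftil :: "nat \<Rightarrow> nat \<Rightarrow> nat \<Rightarrow> crys \<Rightarrow> crys option" where
  "ftil n l i b = (if i \<le> n \<and> fraw n i b \<in> Bcrys n l then Some (fraw n i b) else None)"

fun fpow :: "nat \<Rightarrow> nat \<Rightarrow> nat \<Rightarrow> nat \<Rightarrow> crys \<Rightarrow> crys option" where
  "fpow n l i 0 b = Some b"
| "fpow n l i (Suc k) b = (case fpow n l i k b of None \<Rightarrow> None | Some b' \<Rightarrow> ftil n l i b')"

definition vphi :: "nat \<Rightarrow> nat \<Rightarrow> crys \<Rightarrow> int" where
  "vphi n i b = (if i = 0 then xbs b 1 + pos (xbs b 2 - xs b 2)
     else if i < n then xs b i + pos (xbs b (i+1) - xs b (i+1))
     else 2 * xs b n + x0 b)"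

definition veps :: "nat \<Rightarrow> nat \<Rightarrow> crys \<Rightarrow> int" where
  "veps n i b = (if i = 0 then xs b 1 + pos (xs b 2 - xbs b 2)
     else if i < n then xbs b i + pos (xs b (i+1) - xbs b (i+1))
     else 2 * xbs b n + x0 b)"

text \<open>\<langle>\<lambda>_j, h_i\<rangle> for \<lambda>_j = l \<Lambda>_{eps j}.\<close>
definition lam :: "nat \<Rightarrow> nat \<Rightarrow> nat \<Rightarrow> nat" where
  "lam l j i = (if i = eps j then l else 0)"

definition ground :: "nat \<Rightarrow> nat \<Rightarrow> crys" where
  "ground l j = (if odd j then Cr (\<lambda>_. 0) 0 ((\<lambda>_. 0)(1 := int l))
                 else Cr ((\<lambda>_. 0)(1 := int l)) 0 (\<lambda>_. 0))"

definition idx :: "nat \<Rightarrow> nat \<Rightarrow> nat \<Rightarrow> nat" where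
  "idx n j a = (if a = 1 \<or> a = 2*n - 1 then eps (j+1) else if a \<le> n then a else 2*n - a)"

fun Bset :: "nat \<Rightarrow> nat \<Rightarrow> nat \<Rightarrow> nat \<Rightarrow> crys set" where
  "Bset n l j 0 = {ground l j}"
| "Bset n l j (Suc a) = {b'. \<exists>b \<in> Bset n l j a. \<exists>k. fpow n l (idx n j (Suc a)) k b = Some b'}"

fun bseq :: "nat \<Rightarrow> nat \<Rightarrow> nat \<Rightarrow> nat \<Rightarrow> crys" where
  "bseq n l j 0 = ground l j"
| "bseq n l j (Suc a) = the (fpow n l (idx n j (Suc a))
                               (nat (vphi n (idx n j (Suc a)) (bseq n l j a))) (bseq n l j a))"

end

theory Submission
  imports Defs
begin

(*
  Describing these sets by
  which coordinates may be nonzero, every step enlarges the support by one coordinate: f_i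
  (1 <= i < n) moves mass from x_i to x_(i+1) and from xbar_(i+1) to xbar_i, f_0 from xbar_1 to x_2
  and from xbar_2 to x_1, and f_n opens x_0 and xbar_n.  Such a closure is identified by induction
  on eps_i, since every new element is f_i of its e_i.  Along the way the extremal elements b^(j)_a
  carry all of the mass l on a single coordinate, which they pass one step further each time (f_n
  needs 2l steps, passing through x_0).  Finally every index i^(j)_a differs from eps j, so
  <lambda_j, h_i> = 0 there: condition (III) is just eps_i >= 0, and m = 0 in (IV').
*)

lemma sum_fun_upd:
  fixes f :: "'a \<Rightarrow> 'b::ab_group_add"
  assumes "finite A"
  shows "sum (f(p := v)) A = (if p \<in> A then sum f A - f p + v else sum f A)"
proof (cases "p \<in> A")
  case True
  have "sum (f(p := v)) (A - {p}) = sum f (A - {p})"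
    by (rule sum.cong) auto
  with True have "sum (f(p := v)) A = v + sum f (A - {p})"
    using assms by (simp add: sum.remove)
  also have "\<dots> = sum f A - f p + v"
    using True assms by (simp add: sum_diff1)
  finally show ?thesis using True by simp
next
  case False
  then show ?thesis by (auto intro: sum.cong)
qed

lemma sum_single:
  fixes c :: "'a::ab_group_add" and n :: nat
  assumes "1 \<le> p" "p \<le> n"
  shows "(\<Sum>i=1..n. ((\<lambda>_. 0)(p := c)) i) = c"
  using assms by (simp del: fun_upd_apply add: sum_fun_upd)

section \<open>Crystal operators on B\<close>

definition coord_sum :: "nat \<Rightarrow> crys \<Rightarrow> int" where
  "coord_sum n b = (\<Sum>i=1..n. xs b i) + (\<Sum>i=1..n. xbs b i) + x0 b"

lemma Bcrys_iff: "b \<in> Bcrys n l \<longleftrightarrow> (\<forall>i. 0 \<le> xs b i \<and> 0 \<le> xbs b i)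
      \<and> (\<forall>i. (i = 0 \<or> n < i) \<longrightarrow> xs b i = 0 \<and> xbs b i = 0)
      \<and> x0 b \<in> {0, 1} \<and> coord_sum n b = int l"
  unfolding Bcrys_def coord_sum_def by (simp add: sum.distrib)

lemma Bcrys_support: "b \<in> Bcrys n l \<Longrightarrow> xs b i \<noteq> 0 \<or> xbs b i \<noteq> 0 \<Longrightarrow> i \<in> {1..n}"
  unfolding Bcrys_def by (cases "i = 0 \<or> n < i") auto

lemma ftil_SomeD: "ftil n l i b = Some b' \<Longrightarrow> b' = fraw n i b \<and> b' \<in> Bcrys n l"
  unfolding ftil_def by (auto split: if_splits)

lemma fpow_in_Bcrys: "b \<in> Bcrys n l \<Longrightarrow> fpow n l i k b = Some c \<Longrightarrow> c \<in> Bcrys n l"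
  by (induction k arbitrary: c) (auto simp: ftil_def split: option.splits if_splits)

lemma veps_nonneg: "b \<in> Bcrys n l \<Longrightarrow> 0 \<le> veps n i b"
  unfolding Bcrys_def veps_def pos_def by auto

lemma coord_sum_fraw:
  assumes "2 \<le> n" "i \<le> n"
  shows "coord_sum n (fraw n i b) = coord_sum n b"
  using assms unfolding coord_sum_def fraw_def Let_def
  by (auto simp del: fun_upd_apply simp: sum_fun_upd fun_upd_other)

lemma fraw_in_Bcrys:
  assumes b: "b \<in> Bcrys n l" and n: "2 \<le> n" "i \<le> n" and "0 < vphi n i b"
  shows "fraw n i b \<in> Bcrys n l"
proof -
  have "coord_sum n (fraw n i b) = int l"
    using b n coord_sum_fraw unfolding Bcrys_iff by simp
  moreover have "0 \<le> xs b k" "0 \<le> xbs b k" for k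
    using b unfolding Bcrys_iff by auto
  ultimately show ?thesis
    using assms unfolding Bcrys_iff vphi_def fraw_def Let_def pos_def
    by (auto split: if_splits) (smt (verit))+
qed

(* The raw operator e_i of the crystal (e_i b = b' iff f_i b' = b), cf. fraw_eraw. *)
definition eraw :: "nat \<Rightarrow> nat \<Rightarrow> crys \<Rightarrow> crys" where
  "eraw n i b = (let x = xs b; z = x0 b; y = xbs b in
     if i = 0 then
       (if x 2 > y 2 then Cr (x(2 := x 2 - 1)) z (y(1 := y 1 + 1))
        else Cr (x(1 := x 1 - 1)) z (y(2 := y 2 + 1)))
     else if i < n then
       (if x (i+1) > y (i+1) then Cr (x(i := x i + 1, i+1 := x (i+1) - 1)) z y
        else Cr x z (y(i+1 := y (i+1) + 1, i := y i - 1)))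
     else
       (if z = 1 then Cr (x(n := x n + 1)) (z - 1) y
        else Cr x (z + 1) (y(n := y n - 1))))"

lemma coord_sum_eraw:
  assumes "2 \<le> n" "i \<le> n"
  shows "coord_sum n (eraw n i b) = coord_sum n b"
  using assms unfolding coord_sum_def eraw_def Let_def
  by (auto simp del: fun_upd_apply simp: sum_fun_upd fun_upd_other)

lemma fraw_eraw:
  assumes "i \<le> n" "x0 b \<in> {0, 1}"
  shows "fraw n i (eraw n i b) = b"
  using assms unfolding fraw_def eraw_def Let_def
  by (cases b) (auto simp: fun_eq_iff)

lemma veps_eraw:
  assumes "i \<le> n" "x0 b \<in> {0, 1}"
  shows "veps n i (eraw n i b) = veps n i b - 1"
  using assms unfolding veps_def eraw_def Let_def pos_def
  by auto

lemma eraw_in_Bcrys: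
  assumes b: "b \<in> Bcrys n l" and n: "2 \<le> n" "i \<le> n" and "0 < veps n i b"
  shows "eraw n i b \<in> Bcrys n l"
proof -
  have "coord_sum n (eraw n i b) = int l"
    using b n coord_sum_eraw unfolding Bcrys_iff by simp
  moreover have "0 \<le> xs b k" "0 \<le> xbs b k" for k
    using b unfolding Bcrys_iff by auto
  ultimately show ?thesis
    using assms unfolding Bcrys_iff veps_def eraw_def Let_def pos_def
    by (auto split: if_splits) (smt (verit))+
qed

section \<open>Closures of support sets under f_i\<close>

definition Reach :: "nat \<Rightarrow> nat \<Rightarrow> nat \<Rightarrow> crys set \<Rightarrow> crys set" where
  "Reach n l i S = {b'. \<exists>b\<in>S. \<exists>k. fpow n l i k b = Some b'}"

lemma Reach_eqI:
  assumes "S \<subseteq> S'" "S' \<subseteq> Bcrys n l" "i \<le> n"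
    and closed: "\<And>b b'. b \<in> S' \<Longrightarrow> ftil n l i b = Some b' \<Longrightarrow> b' \<in> S'"
    and lift: "\<And>t. t \<in> S' \<Longrightarrow> t \<notin> S \<Longrightarrow> 0 < veps n i t \<and> eraw n i t \<in> S'"
  shows "Reach n l i S = S'"
proof
  have "c \<in> S'" if "b \<in> S" "fpow n l i k b = Some c" for b k c
    using that closed assms(1) by (induction k arbitrary: c) (auto split: option.splits)
  then show "Reach n l i S \<subseteq> S'"
    unfolding Reach_def by blast
next
  show "S' \<subseteq> Reach n l i S"
  proof
    fix t assume "t \<in> S'"
    then show "t \<in> Reach n l i S"
    proof (induction "nat (veps n i t)" arbitrary: t rule: less_induct)
      case less
      show ?case
      proof (cases "t \<in> S")
        case True
        then show ?thesis
          unfolding Reach_def by (auto intro!: bexI[of _ t] exI[of _ 0])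
      next
        case False
        let ?t' = "eraw n i t"
        have t: "t \<in> Bcrys n l" "0 < veps n i t" "?t' \<in> S'"
          using less.prems False assms(2) lift by auto
        then have x0: "x0 t \<in> {0, 1}"
          unfolding Bcrys_def by blast
        have "ftil n l i ?t' = Some t"
          using t x0 assms(3) by (simp add: ftil_def fraw_eraw)
        moreover have "?t' \<in> Reach n l i S"
          using less.hyps[of ?t'] t x0 assms(3) by (simp add: veps_eraw)
        then obtain b k where "b \<in> S" "fpow n l i k b = Some ?t'"
          unfolding Reach_def by blast
        ultimately have "b \<in> S" "fpow n l i (Suc k) b = Some t"
          by simp_all
        then show ?thesis
          unfolding Reach_def by blast
      qed
    qed
  qed
qed

definition Bsupp :: "nat \<Rightarrow> nat \<Rightarrow> nat set \<Rightarrow> bool \<Rightarrow> nat set \<Rightarrow> crys set" where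
  "Bsupp n l X z Y = {b \<in> Bcrys n l. (\<forall>i. xs b i \<noteq> 0 \<longrightarrow> i \<in> X) \<and> (\<not> z \<longrightarrow> x0 b = 0)
       \<and> (\<forall>i. xbs b i \<noteq> 0 \<longrightarrow> i \<in> Y)}"

lemma Bsupp_nonneg:
  assumes "b \<in> Bsupp n l X z Y"
  shows "0 \<le> xs b k" "0 \<le> xbs b k"
  using assms unfolding Bsupp_def Bcrys_iff by auto

lemma Reach_Bsupp_mid:
  assumes i: "1 \<le> i" "i < n" and X: "i \<in> X" and Y: "i \<notin> Y" "i+1 \<in> Y \<longrightarrow> i+1 \<in> X"
  shows "Reach n l i (Bsupp n l X z Y)
       = Bsupp n l (insert (i+1) X) z (if i+1 \<in> Y then insert i Y else Y)"
    (is "_ = ?S'")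
proof (rule Reach_eqI)
  show "Bsupp n l X z Y \<subseteq> ?S'" "?S' \<subseteq> Bcrys n l"
    unfolding Bsupp_def by auto
  show "i \<le> n" using i by simp
next
  fix b b' assume b: "b \<in> ?S'" and "ftil n l i b = Some b'"
  then have "b' = fraw n i b" "b' \<in> Bcrys n l"
    by (auto dest: ftil_SomeD)
  then show "b' \<in> ?S'"
    using b Bsupp_nonneg(1)[OF b, where k="i+1"] i X unfolding Bsupp_def fraw_def Let_def
    by (auto split: if_splits)
next
  fix t assume t: "t \<in> ?S'" "t \<notin> Bsupp n l X z Y"
  note nonneg = Bsupp_nonneg[OF t(1)]
  have "xbs t i \<noteq> 0 \<or> (xs t (i+1) \<noteq> 0 \<and> i+1 \<notin> X)"
    using t Y unfolding Bsupp_def by (auto split: if_splits)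
  then have "0 < veps n i t"
  proof
    assume "xs t (i+1) \<noteq> 0 \<and> i+1 \<notin> X"
    moreover from this have "xbs t (i+1) = 0"
      using t(1) Y unfolding Bsupp_def by auto
    ultimately show ?thesis
      using i nonneg(1)[of "i+1"] nonneg(2)[of i] unfolding veps_def pos_def by auto
  qed (use i nonneg(2)[of i] in \<open>auto simp: veps_def pos_def\<close>)
  moreover from this have "eraw n i t \<in> Bcrys n l"
    using t(1) i unfolding Bsupp_def by (intro eraw_in_Bcrys) auto
  ultimately show "0 < veps n i t \<and> eraw n i t \<in> ?S'"
    using t Y X i unfolding Bsupp_def eraw_def veps_def pos_def Let_def
    by (auto split: if_splits)
qed

lemma Reach_Bsupp_zero:
  assumes n: "2 \<le> n" and X: "1 \<notin> X" "2 \<in> Y \<longrightarrow> 2 \<in> X" and Y: "1 \<in> Y"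
  shows "Reach n l 0 (Bsupp n l X z Y)
       = Bsupp n l (if 2 \<in> Y then insert 1 (insert 2 X) else insert 2 X) z Y"
    (is "_ = ?S'")
proof (rule Reach_eqI)
  show "Bsupp n l X z Y \<subseteq> ?S'" "?S' \<subseteq> Bcrys n l"
    unfolding Bsupp_def by auto
  show "0 \<le> n" by simp
next
  fix b b' assume b: "b \<in> ?S'" and "ftil n l 0 b = Some b'"
  then have "b' = fraw n 0 b" "b' \<in> Bcrys n l"
    by (auto dest: ftil_SomeD)
  then show "b' \<in> ?S'"
    using b Bsupp_nonneg(1)[OF b, where k=2] Y unfolding Bsupp_def fraw_def Let_def
    by (auto split: if_splits)
next
  fix t assume t: "t \<in> ?S'" "t \<notin> Bsupp n l X z Y"
  note nonneg = Bsupp_nonneg[OF t(1)]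
  have "xs t 1 \<noteq> 0 \<or> (xs t 2 \<noteq> 0 \<and> 2 \<notin> X)"
    using t unfolding Bsupp_def by (auto split: if_splits)
  then have "0 < veps n 0 t"
  proof
    assume "xs t 2 \<noteq> 0 \<and> 2 \<notin> X"
    moreover from this have "xbs t 2 = 0"
      using t(1) X unfolding Bsupp_def by auto
    ultimately show ?thesis
      using nonneg(1)[of 1] nonneg(1)[of 2] unfolding veps_def pos_def by auto
  qed (use nonneg(1)[of 1] in \<open>auto simp: veps_def pos_def\<close>)
  moreover from this have "eraw n 0 t \<in> Bcrys n l"
    using t(1) n unfolding Bsupp_def by (intro eraw_in_Bcrys) auto
  moreover have "xs t 1 \<noteq> 0 \<Longrightarrow> 2 \<in> Y"
    using t(1) X unfolding Bsupp_def by (auto split: if_splits)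
  ultimately show "0 < veps n 0 t \<and> eraw n 0 t \<in> ?S'"
    using t X Y unfolding Bsupp_def eraw_def veps_def pos_def Let_def
    by (auto split: if_splits)
qed

lemma Reach_Bsupp_n:
  assumes n: "2 \<le> n" and X: "n \<in> X" and Y: "n \<notin> Y"
  shows "Reach n l n (Bsupp n l X False Y) = Bsupp n l X True (insert n Y)"
    (is "_ = ?S'")
proof (rule Reach_eqI)
  show "Bsupp n l X False Y \<subseteq> ?S'" "?S' \<subseteq> Bcrys n l"
    unfolding Bsupp_def by auto
  show "n \<le> n" by simp
next
  fix b b' assume b: "b \<in> ?S'" and "ftil n l n b = Some b'"
  then have "b' = fraw n n b" "b' \<in> Bcrys n l"
    by (auto dest: ftil_SomeD)
  then show "b' \<in> ?S'"
    using b X n unfolding Bsupp_def fraw_def Let_def by auto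
next
  fix t assume t: "t \<in> ?S'" "t \<notin> Bsupp n l X False Y"
  have "x0 t \<in> {0, 1}"
    using t(1) unfolding Bsupp_def Bcrys_def by blast
  moreover have "x0 t \<noteq> 0 \<or> xbs t n \<noteq> 0"
    using t unfolding Bsupp_def by auto
  ultimately have "0 < veps n n t"
    using Bsupp_nonneg(2)[OF t(1), where k=n] n unfolding veps_def by auto
  moreover from this have "eraw n n t \<in> Bcrys n l"
    using t(1) n unfolding Bsupp_def by (intro eraw_in_Bcrys) auto
  ultimately show "0 < veps n n t \<and> eraw n n t \<in> ?S'"
    using t X n unfolding Bsupp_def eraw_def Let_def by auto
qed

lemma Bsupp_full: "Bsupp n l {1..n} True {1..n} = Bcrys n l"
  unfolding Bsupp_def using Bcrys_support by blast

abbreviation at_xs :: "nat \<Rightarrow> int \<Rightarrow> crys" where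
  "at_xs p c \<equiv> Cr ((\<lambda>_. 0)(p := c)) 0 (\<lambda>_. 0)"

abbreviation at_xbs :: "nat \<Rightarrow> int \<Rightarrow> crys" where
  "at_xbs p c \<equiv> Cr (\<lambda>_. 0) 0 ((\<lambda>_. 0)(p := c))"

lemma Bsupp_single_xs:
  assumes "1 \<le> p" "p \<le> n"
  shows "Bsupp n l {p} False {} = {at_xs p (int l)}"
proof (intro equalityI subsetI)
  fix b assume b: "b \<in> Bsupp n l {p} False {}"
  then have "xs b = (\<lambda>_. 0)(p := xs b p)" "x0 b = 0" "xbs b = (\<lambda>_. 0)"
    unfolding Bsupp_def by (auto simp: fun_eq_iff)
  moreover from this have "xs b p = int l"
    using b assms sum_single[of p n "xs b p"] unfolding Bsupp_def Bcrys_def by simp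
  ultimately show "b \<in> {at_xs p (int l)}"
    by (cases b) simp
qed (use assms sum_single[of p n "int l"] in \<open>auto simp: Bsupp_def Bcrys_def\<close>)

lemma Bsupp_single_xbs:
  assumes "1 \<le> p" "p \<le> n"
  shows "Bsupp n l {} False {p} = {at_xbs p (int l)}"
proof (intro equalityI subsetI)
  fix b assume b: "b \<in> Bsupp n l {} False {p}"
  then have "xs b = (\<lambda>_. 0)" "x0 b = 0" "xbs b = (\<lambda>_. 0)(p := xbs b p)"
    unfolding Bsupp_def by (auto simp: fun_eq_iff)
  moreover from this have "xbs b p = int l"
    using b assms sum_single[of p n "xbs b p"] unfolding Bsupp_def Bcrys_def by simp
  ultimately show "b \<in> {at_xbs p (int l)}"
    by (cases b) simp
qed (use assms sum_single[of p n "int l"] in \<open>auto simp: Bsupp_def Bcrys_def\<close>)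

lemma at_xs_in_Bcrys: "1 \<le> p \<Longrightarrow> p \<le> n \<Longrightarrow> at_xs p (int l) \<in> Bcrys n l"
  using Bsupp_single_xs[of p n l] unfolding Bsupp_def by blast

lemma at_xbs_in_Bcrys: "1 \<le> p \<Longrightarrow> p \<le> n \<Longrightarrow> at_xbs p (int l) \<in> Bcrys n l"
  using Bsupp_single_xbs[of p n l] unfolding Bsupp_def by blast

section \<open>The sets B_a\<close>

lemma Bset_Suc: "Bset n l j (Suc a) = Reach n l (idx n j (Suc a)) (Bset n l j a)"
  by (simp add: Reach_def)

lemma idx_first_half: "2 \<le> a \<Longrightarrow> a \<le> n \<Longrightarrow> idx n j a = a"
  unfolding idx_def by auto

lemma idx_second_half: "n < a \<Longrightarrow> a < 2*n - 1 \<Longrightarrow> idx n j a = 2*n - a"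
  unfolding idx_def by auto

lemma idx_last: "idx n j (2*n - 1) = eps (Suc j)"
  unfolding idx_def by simp

definition ground_xsupp :: "nat \<Rightarrow> nat set" where
  "ground_xsupp j = (if odd j then {} else {1})"

definition ground_xbsupp :: "nat \<Rightarrow> nat set" where
  "ground_xbsupp j = (if odd j then {1} else {})"

lemma ground_eq_Bsupp:
  assumes "1 \<le> n"
  shows "{ground l j} = Bsupp n l (ground_xsupp j) False (ground_xbsupp j)"
  using assms Bsupp_single_xs[of 1 n l] Bsupp_single_xbs[of 1 n l]
  by (simp add: ground_def ground_xsupp_def ground_xbsupp_def)

lemma Bset_1:
  assumes "3 \<le> n"
  shows "Bset n l j 1 = Bsupp n l (ground_xsupp j \<union> {2}) False (ground_xbsupp j)"
proof -
  have "Bset n l j 1 = Reach n l (eps (Suc j)) (Bsupp n l (ground_xsupp j) False (ground_xbsupp j))"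
    using Bset_Suc[of n l j 0] assms ground_eq_Bsupp[of n l j] by (simp add: idx_def)
  also have "\<dots> = Bsupp n l (ground_xsupp j \<union> {2}) False (ground_xbsupp j)"
  proof (cases "odd j")
    case True
    then have "eps (Suc j) = 0" "ground_xsupp j = {}" "ground_xbsupp j = {1}"
      by (simp_all add: eps_def ground_xsupp_def ground_xbsupp_def)
    moreover have "Reach n l 0 (Bsupp n l {} False {1}) = Bsupp n l {2} False {1}"
      using assms Reach_Bsupp_zero[of n "{}" "{1}" l False] by simp
    ultimately show ?thesis by simp
  next
    case False
    then have "eps (Suc j) = 1" "ground_xsupp j = {1}" "ground_xbsupp j = {}"
      by (simp_all add: eps_def ground_xsupp_def ground_xbsupp_def)
    moreover have "Reach n l 1 (Bsupp n l {1} False {}) = Bsupp n l {1, 2} False {}"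
      using assms Reach_Bsupp_mid[of 1 n "{1}" "{}" l False] by (simp add: numeral_2_eq_2 insert_commute)
    ultimately show ?thesis by (simp add: insert_commute)
  qed
  finally show ?thesis .
qed

lemma Bset_first_half:
  assumes "3 \<le> n" "1 \<le> a" "a \<le> n - 1"
  shows "Bset n l j a = Bsupp n l (ground_xsupp j \<union> {2..a+1}) False (ground_xbsupp j)"
  using assms(2,3)
proof (induction a rule: dec_induct)
  case base
  then show ?case using Bset_1[OF assms(1)] by (simp add: numeral_2_eq_2)
next
  case (step m)
  have "Bset n l j (Suc m) = Reach n l (Suc m) (Bsupp n l (ground_xsupp j \<union> {2..m+1}) False (ground_xbsupp j))"
    using step Bset_Suc[of n l j m] by (simp add: idx_first_half)
  also have "\<dots> = Bsupp n l (ground_xsupp j \<union> {2..Suc m+1}) False (ground_xbsupp j)"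
    using step Reach_Bsupp_mid[of "Suc m" n "ground_xsupp j \<union> {2..m+1}" "ground_xbsupp j" l False]
    by (auto simp: ground_xsupp_def ground_xbsupp_def atLeastAtMostSuc_conv insert_commute)
  finally show ?case .
qed

lemma Bset_second_half:
  assumes "3 \<le> n" "1 \<le> k" "k \<le> n - 1"
  shows "Bset n l j (n + k - 1)
       = Bsupp n l (ground_xsupp j \<union> {2..n}) True (ground_xbsupp j \<union> {n-k+1..n})"
  using assms(2,3)
proof (induction k rule: dec_induct)
  case base
  have "Bset n l j n = Reach n l n (Bsupp n l (ground_xsupp j \<union> {2..n}) False (ground_xbsupp j))"
    using assms Bset_Suc[of n l j "n-1"] Bset_first_half[OF assms(1), of "n-1" l j]
    by (simp add: idx_first_half)
  also have "\<dots> = Bsupp n l (ground_xsupp j \<union> {2..n}) True (insert n (ground_xbsupp j))"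
    using assms by (intro Reach_Bsupp_n) (auto simp: ground_xbsupp_def)
  finally show ?case using assms by simp
next
  case (step m)
  have "Bset n l j (n + Suc m - 1)
      = Reach n l (n - m) (Bsupp n l (ground_xsupp j \<union> {2..n}) True (ground_xbsupp j \<union> {n-m+1..n}))"
    using step Bset_Suc[of n l j "n+m-1"] by (simp add: idx_second_half)
  also have "\<dots> = Bsupp n l (insert (n-m+1) (ground_xsupp j \<union> {2..n})) True
                         (insert (n-m) (ground_xbsupp j \<union> {n-m+1..n}))"
    using step by (subst Reach_Bsupp_mid) (auto simp: ground_xbsupp_def)
  also have "insert (n-m+1) (ground_xsupp j \<union> {2..n}) = ground_xsupp j \<union> {2..n}"
    using step by auto
  also have "insert (n-m) (ground_xbsupp j \<union> {n-m+1..n}) = ground_xbsupp j \<union> {n - Suc m + 1..n}"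
    using step by auto
  finally show ?case .
qed

lemma Reach_last_Bsupp:
  assumes "3 \<le> n"
  shows "Reach n l (eps (Suc j))
           (Bsupp n l (ground_xsupp j \<union> {2..n}) True (ground_xbsupp j \<union> {2..n}))
         = Bcrys n l"
proof -
  have "Reach n l (eps (Suc j))
      (Bsupp n l (ground_xsupp j \<union> {2..n}) True (ground_xbsupp j \<union> {2..n}))
      = Bsupp n l {1..n} True {1..n}"
  proof (cases "odd j")
    case True
    then have "eps (Suc j) = 0" "ground_xsupp j = {}" "ground_xbsupp j = {1}"
      by (simp_all add: eps_def ground_xsupp_def ground_xbsupp_def)
    then have "Reach n l (eps (Suc j))
        (Bsupp n l (ground_xsupp j \<union> {2..n}) True (ground_xbsupp j \<union> {2..n}))
        = Reach n l 0 (Bsupp n l {2..n} True (insert 1 {2..n}))"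
      by simp
    also have "\<dots> = Bsupp n l (insert 1 (insert 2 {2..n})) True (insert 1 {2..n})"
      using assms by (subst Reach_Bsupp_zero) auto
    also have "insert 2 {2..n} = {2..n}"
      using assms by auto
    also have "insert 1 {2..n} = {1..n}"
      using assms by auto
    finally show ?thesis .
  next
    case False
    then have "eps (Suc j) = 1" "ground_xsupp j = {1}" "ground_xbsupp j = {}"
      by (simp_all add: eps_def ground_xsupp_def ground_xbsupp_def)
    then have "Reach n l (eps (Suc j))
        (Bsupp n l (ground_xsupp j \<union> {2..n}) True (ground_xbsupp j \<union> {2..n}))
        = Reach n l 1 (Bsupp n l (insert 1 {2..n}) True {2..n})"
      by simp
    also have "\<dots> = Bsupp n l (insert 2 (insert 1 {2..n})) True (insert 1 {2..n})"
      using assms by (subst Reach_Bsupp_mid) (auto simp: numeral_2_eq_2)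
    also have "insert 1 {2..n} = {1..n}"
      using assms by auto
    also have "insert 2 {1..n} = {1..n}"
      using assms by auto
    finally show ?thesis .
  qed
  then show ?thesis
    using Bsupp_full by simp
qed

lemma Bset_last:
  assumes "3 \<le> n"
  shows "Bset n l j (2*n - 1) = Bcrys n l"
proof -
  have last: "Suc (n + (n-1) - 1) = 2*n - 1"
    using assms by simp
  have "Bset n l j (2*n - 1) = Reach n l (idx n j (2*n - 1)) (Bset n l j (n + (n-1) - 1))"
    using Bset_Suc[of n l j "n + (n-1) - 1"] unfolding last .
  also have "idx n j (2*n - 1) = eps (Suc j)"
    by (rule idx_last)
  also have "Bset n l j (n + (n-1) - 1)
      = Bsupp n l (ground_xsupp j \<union> {2..n}) True (ground_xbsupp j \<union> {n - (n-1) + 1..n})"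
    using assms by (intro Bset_second_half) auto
  also have "n - (n-1) + 1 = 2"
    using assms by simp
  finally show ?thesis
    using Reach_last_Bsupp[OF assms] by simp
qed

lemma Bset_subset_Bcrys: "1 \<le> n \<Longrightarrow> Bset n l j a \<subseteq> Bcrys n l"
proof (induction a)
  case 0
  then show ?case using ground_eq_Bsupp[of n l j] by (auto simp: Bsupp_def)
next
  case (Suc a)
  then show ?case using fpow_in_Bcrys by auto
qed

lemma lam_idx_eq_0:
  assumes "2 \<le> n" "1 \<le> a" "a \<le> 2*n - 1"
  shows "lam l j (idx n j a) = 0"
proof -
  have "eps (Suc j) \<noteq> eps j" "eps j \<le> 1"
    by (simp_all add: eps_def)
  then have "idx n j a \<noteq> eps j"
    using assms unfolding idx_def by auto
  then show ?thesis
    by (simp add: lam_def)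
qed

lemma lam_le_veps_Bset:
  assumes "2 \<le> n" "a \<in> {1..2*n-1}" "b \<in> Bset n l j (a - 1)"
  shows "int (lam l j (idx n j a)) \<le> veps n (idx n j a) b"
proof -
  have "b \<in> Bcrys n l"
    using assms Bset_subset_Bcrys[of n l j "a - 1"] by auto
  then show ?thesis
    using assms lam_idx_eq_0[of n a l j] veps_nonneg by simp
qed

section \<open>The extremal elements b_a\<close>

lemma fpow_fraw_path:
  assumes n: "2 \<le> n" "i \<le> n" and start: "g 0 \<in> Bcrys n l"
    and step: "\<And>k. k < m \<Longrightarrow> fraw n i (g k) = g (Suc k) \<and> 0 < vphi n i (g k)"
  shows "fpow n l i m (g 0) = Some (g m)"
proof -
  have "fpow n l i m (g 0) = Some (g m) \<and> g m \<in> Bcrys n l"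
    using step
  proof (induction m)
    case 0
    then show ?case using start by simp
  next
    case (Suc m)
    then have "fpow n l i m (g 0) = Some (g m)" "g m \<in> Bcrys n l"
      "fraw n i (g m) = g (Suc m)" "0 < vphi n i (g m)"
      by auto
    moreover from this have "g (Suc m) \<in> Bcrys n l"
      using n fraw_in_Bcrys by metis
    ultimately show ?case
      using n by (simp add: ftil_def)
  qed
  then show ?thesis ..
qed

lemma fpow_shift_xs:
  assumes "1 \<le> i" "i < n"
  shows "fpow n l i l (at_xs i (int l)) = Some (at_xs (i+1) (int l))"
proof -
  define g where "g k = Cr ((\<lambda>_. 0)(i := int l - int k, i+1 := int k)) 0 (\<lambda>_. 0)" for k
  have ends: "g 0 = at_xs i (int l)" "g l = at_xs (i+1) (int l)"
    by (auto simp: g_def fun_eq_iff)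
  have "fpow n l i l (g 0) = Some (g l)"
  proof (rule fpow_fraw_path)
    show "g 0 \<in> Bcrys n l"
      using assms at_xs_in_Bcrys[of i n l] ends by simp
    show "fraw n i (g k) = g (Suc k) \<and> 0 < vphi n i (g k)" if "k < l" for k
      using assms that by (simp add: g_def fraw_def vphi_def pos_def Let_def fun_eq_iff)
  qed (use assms in auto)
  then show ?thesis
    unfolding ends .
qed

lemma fpow_shift_xbs:
  assumes "1 \<le> i" "i < n"
  shows "fpow n l i l (at_xbs (i+1) (int l)) = Some (at_xbs i (int l))"
proof -
  define g where "g k = Cr (\<lambda>_. 0) 0 ((\<lambda>_. 0)(i+1 := int l - int k, i := int k))" for k
  have ends: "g 0 = at_xbs (i+1) (int l)" "g l = at_xbs i (int l)"
    by (auto simp: g_def fun_eq_iff)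
  have "fpow n l i l (g 0) = Some (g l)"
  proof (rule fpow_fraw_path)
    show "g 0 \<in> Bcrys n l"
      using assms at_xbs_in_Bcrys[of "i+1" n l] ends by simp
    show "fraw n i (g k) = g (Suc k) \<and> 0 < vphi n i (g k)" if "k < l" for k
      using assms that by (simp add: g_def fraw_def vphi_def pos_def Let_def fun_eq_iff)
  qed (use assms in auto)
  then show ?thesis
    unfolding ends .
qed

lemma fpow_0_xbs1_to_xs2:
  assumes "2 \<le> n"
  shows "fpow n l 0 l (at_xbs 1 (int l)) = Some (at_xs 2 (int l))"
proof -
  define g where "g k = Cr ((\<lambda>_. 0)(2 := int k)) 0 ((\<lambda>_. 0)(1 := int l - int k))" for k
  have ends: "g 0 = at_xbs 1 (int l)" "g l = at_xs 2 (int l)"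
    by (auto simp: g_def fun_eq_iff)
  have "fpow n l 0 l (g 0) = Some (g l)"
  proof (rule fpow_fraw_path)
    show "g 0 \<in> Bcrys n l"
      using assms at_xbs_in_Bcrys[of 1 n l] ends by simp
    show "fraw n 0 (g k) = g (Suc k) \<and> 0 < vphi n 0 (g k)" if "k < l" for k
      using that by (simp add: g_def fraw_def vphi_def pos_def Let_def fun_eq_iff)
  qed (use assms in auto)
  then show ?thesis
    unfolding ends .
qed

lemma fpow_0_xbs2_to_xs1:
  assumes "2 \<le> n"
  shows "fpow n l 0 l (at_xbs 2 (int l)) = Some (at_xs 1 (int l))"
proof -
  define g where "g k = Cr ((\<lambda>_. 0)(1 := int k)) 0 ((\<lambda>_. 0)(2 := int l - int k))" for k
  have ends: "g 0 = at_xbs 2 (int l)" "g l = at_xs 1 (int l)"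
    by (auto simp: g_def fun_eq_iff)
  have "fpow n l 0 l (g 0) = Some (g l)"
  proof (rule fpow_fraw_path)
    show "g 0 \<in> Bcrys n l"
      using assms at_xbs_in_Bcrys[of 2 n l] ends by simp
    show "fraw n 0 (g k) = g (Suc k) \<and> 0 < vphi n 0 (g k)" if "k < l" for k
      using that by (simp add: g_def fraw_def vphi_def pos_def Let_def fun_eq_iff)
  qed (use assms in auto)
  then show ?thesis
    unfolding ends .
qed

(* Each unit of x_n passes through x_0: after k steps, (k+1) div 2 units have left x_n and k div 2 have reached xbar_n. *)
lemma fpow_n_xs_to_xbs:
  assumes "2 \<le> n"
  shows "fpow n l n (2*l) (at_xs n (int l)) = Some (at_xbs n (int l))"
proof -
  define g where "g k = Cr ((\<lambda>_. 0)(n := int l - int ((k+1) div 2))) (int (k mod 2))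
                          ((\<lambda>_. 0)(n := int (k div 2)))" for k
  have ends: "g 0 = at_xs n (int l)" "g (2*l) = at_xbs n (int l)"
    by (auto simp: g_def fun_eq_iff)
  have "fpow n l n (2*l) (g 0) = Some (g (2*l))"
  proof (rule fpow_fraw_path)
    show "g 0 \<in> Bcrys n l"
      using assms at_xs_in_Bcrys[of n n l] ends by simp
    show "fraw n n (g k) = g (Suc k) \<and> 0 < vphi n n (g k)" if "k < 2*l" for k
    proof (cases "even k")
      case True
      then obtain m where "k = 2*m" by blast
      then show ?thesis
        using assms that by (simp add: g_def fraw_def vphi_def Let_def fun_eq_iff)
    next
      case False
      then obtain m where "k = 2*m + 1" by (blast elim: oddE)
      then show ?thesis
        using assms that by (simp add: g_def fraw_def vphi_def Let_def fun_eq_iff)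
    qed
  qed (use assms in auto)
  then show ?thesis
    unfolding ends .
qed

lemma bseq_Suc_eqI:
  assumes "bseq n l j a = b" "idx n j (Suc a) = i" "vphi n i b = int m" "fpow n l i m b = Some b'"
  shows "bseq n l j (Suc a) = b'"
  using assms by simp

lemma bseq_1:
  assumes "3 \<le> n"
  shows "bseq n l j 1 = at_xs 2 (int l)"
proof (cases "odd j")
  case True
  have "bseq n l j (Suc 0) = at_xs 2 (int l)"
  proof (rule bseq_Suc_eqI)
    show "bseq n l j 0 = at_xbs 1 (int l)" "idx n j (Suc 0) = 0"
      using True by (simp_all add: ground_def idx_def eps_def)
    show "vphi n 0 (at_xbs 1 (int l)) = int l"
      by (simp add: vphi_def pos_def)
    show "fpow n l 0 l (at_xbs 1 (int l)) = Some (at_xs 2 (int l))"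
      using assms by (intro fpow_0_xbs1_to_xs2) simp
  qed
  then show ?thesis by simp
next
  case False
  have "bseq n l j (Suc 0) = at_xs (1+1) (int l)"
  proof (rule bseq_Suc_eqI)
    show "bseq n l j 0 = at_xs 1 (int l)" "idx n j (Suc 0) = 1"
      using False by (simp_all add: ground_def idx_def eps_def)
    show "vphi n 1 (at_xs 1 (int l)) = int l"
      using assms by (simp add: vphi_def pos_def)
    show "fpow n l 1 l (at_xs 1 (int l)) = Some (at_xs (1+1) (int l))"
      using assms by (intro fpow_shift_xs) simp_all
  qed
  then show ?thesis by (simp add: numeral_2_eq_2)
qed

lemma bseq_first_half:
  assumes "3 \<le> n" "1 \<le> a" "a \<le> n - 1"
  shows "bseq n l j a = at_xs (a+1) (int l)"
  using assms(2,3)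
proof (induction a rule: dec_induct)
  case base
  then show ?case using bseq_1[OF assms(1)] by (simp add: numeral_2_eq_2 fun_eq_iff)
next
  case (step m)
  show ?case
  proof (rule bseq_Suc_eqI)
    show "bseq n l j m = at_xs (Suc m) (int l)" "idx n j (Suc m) = Suc m"
      using step by (simp_all add: idx_first_half fun_eq_iff)
    show "vphi n (Suc m) (at_xs (Suc m) (int l)) = int l"
      using step assms(1) by (auto simp: vphi_def pos_def)
    show "fpow n l (Suc m) l (at_xs (Suc m) (int l)) = Some (at_xs (Suc m + 1) (int l))"
      using step by (intro fpow_shift_xs) auto
  qed
qed

lemma bseq_second_half:
  assumes "3 \<le> n" "1 \<le> k" "k \<le> n - 1"
  shows "bseq n l j (n + k - 1) = at_xbs (n - k + 1) (int l)"
  using assms(2,3)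
proof (induction k rule: dec_induct)
  case base
  have idx_eqs: "n + 1 - 1 = Suc (n - 1)" "n - 1 + 1 = n"
    using assms by simp_all
  show ?case unfolding idx_eqs
  proof (rule bseq_Suc_eqI)
    show "bseq n l j (n - 1) = at_xs n (int l)" "idx n j (Suc (n - 1)) = n"
      using assms bseq_first_half[OF assms(1), of "n - 1" l j] by (simp_all add: idx_first_half)
    show "vphi n n (at_xs n (int l)) = int (2*l)"
      using assms by (simp add: vphi_def)
    show "fpow n l n (2*l) (at_xs n (int l)) = Some (at_xbs n (int l))"
      using assms by (intro fpow_n_xs_to_xbs) simp
  qed
next
  case (step m)
  have idx_eqs: "n + Suc m - 1 = Suc (n + m - 1)" "n - Suc m + 1 = n - m"
    using step by auto
  show ?case unfolding idx_eqs
  proof (rule bseq_Suc_eqI)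
    show "bseq n l j (n + m - 1) = at_xbs (n - m + 1) (int l)" "idx n j (Suc (n + m - 1)) = n - m"
      using step by (simp_all add: idx_second_half fun_eq_iff)
    show "vphi n (n - m) (at_xbs (n - m + 1) (int l)) = int l"
      using step by (simp add: vphi_def pos_def)
    show "fpow n l (n - m) l (at_xbs (n - m + 1) (int l)) = Some (at_xbs (n - m) (int l))"
      using step by (intro fpow_shift_xbs) auto
  qed
qed

lemma bseq_last:
  assumes "3 \<le> n"
  shows "bseq n l j (2*n - 1) = ground l (j+1)"
proof -
  have last: "Suc (n + (n-1) - 1) = 2*n - 1"
    using assms by simp
  have prev: "bseq n l j (n + (n-1) - 1) = at_xbs 2 (int l)"
    using bseq_second_half[OF assms, of "n-1" l j] assms by (simp add: numeral_2_eq_2)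
  have "bseq n l j (Suc (n + (n-1) - 1)) = ground l (j+1)"
  proof (cases "odd j")
    case True
    show ?thesis
    proof (rule bseq_Suc_eqI)
      show "idx n j (Suc (n + (n-1) - 1)) = 0"
        using True unfolding last by (simp add: idx_def eps_def)
      show "vphi n 0 (at_xbs 2 (int l)) = int l"
        by (simp add: vphi_def pos_def)
      show "fpow n l 0 l (at_xbs 2 (int l)) = Some (ground l (j+1))"
        using True assms fpow_0_xbs2_to_xs1[of n l] by (simp add: ground_def)
    qed (rule prev)
  next
    case False
    show ?thesis
    proof (rule bseq_Suc_eqI)
      show "idx n j (Suc (n + (n-1) - 1)) = 1"
        using False unfolding last by (simp add: idx_def eps_def)
      show "vphi n 1 (at_xbs 2 (int l)) = int l"
        using assms by (simp add: vphi_def pos_def)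
      have "ground l (j+1) = at_xbs 1 (int l)"
        using False by (simp add: ground_def)
      moreover have "fpow n l 1 l (at_xbs 2 (int l)) = Some (at_xbs 1 (int l))"
        using assms fpow_shift_xbs[of 1 n l] by (simp add: numeral_2_eq_2)
      ultimately show "fpow n l 1 l (at_xbs 2 (int l)) = Some (ground l (j+1))"
        by simp
    qed (rule prev)
  qed
  then show ?thesis unfolding last .
qed

lemma bseq_extremal:
  fixes n l j a :: nat
  assumes n: "3 \<le> n" and l: "1 \<le> l" and a: "1 \<le> a" "a \<le> 2*n - 1"
  defines "i' \<equiv> (if a = 2*n - 1 then idx n (j+1) 1 else idx n j (a+1))"
  shows "veps n i' (bseq n l j a) = 0 \<and> 0 < vphi n i' (bseq n l j a)"
proof -
  consider (first) "a \<le> n - 1" | (second) "n \<le> a" "a < 2*n - 1" | (last) "a = 2*n - 1"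
    using a by linarith
  then show ?thesis
  proof cases
    case first
    then have "bseq n l j a = at_xs (a+1) (int l)" "i' = a + 1"
      using n a bseq_first_half[of n a l j] by (auto simp: i'_def idx_first_half)
    then show ?thesis
      using first n l by (auto simp: veps_def vphi_def pos_def)
  next
    case second
    define k where "k = a + 1 - n"
    then have k: "1 \<le> k" "k \<le> n - 1" "a = n + k - 1"
      using second by auto
    then have b: "bseq n l j a = at_xbs (n - k + 1) (int l)"
      using bseq_second_half[OF n k(1,2)] by simp
    show ?thesis
    proof (cases "a + 1 = 2*n - 1")
      case True
      then have "i' = eps (Suc j)" "n - k + 1 = 2"
        using k by (auto simp: i'_def idx_def)
      then show ?thesis
        using b l n by (auto simp: eps_def veps_def vphi_def pos_def)
    next
      case False
      then have "i' = n - k"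
        using second k by (simp add: i'_def idx_second_half)
      then show ?thesis
        using b l k n by (auto simp: veps_def vphi_def pos_def)
    qed
  next
    case last
    then have "i' = eps j" "bseq n l j a = ground l (j+1)"
      using bseq_last[OF n] by (simp_all add: i'_def idx_def eps_def)
    then show ?thesis
      using l n by (auto simp: eps_def ground_def veps_def vphi_def pos_def)
  qed
qed

theorem mainTheorem4:
  fixes n l :: nat
  assumes "n \<ge> 3" and "l \<ge> 1"
  shows
   "(\<forall>j\<ge>1. Bset n l j (2*n - 1) = Bcrys n l)
  \<and> (\<forall>j\<ge>1. \<forall>a\<in>{1..2*n-1}. \<forall>b\<in>Bset n l j (a - 1).
        int (lam l j (idx n j a)) \<le> veps n (idx n j a) b)
  \<and> (\<forall>j\<ge>1. \<forall>a\<in>{1..2*n-1}.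
        (let i' = (if a = 2*n - 1 then idx n (j+1) 1 else idx n j (a+1)) in
          veps n i' (bseq n l j a) = 0 \<and> vphi n i' (bseq n l j a) > 0))
  \<and> (\<forall>j\<ge>1. fpow n l (idx n (j+1) 1) (lam l (j+1) (idx n (j+1) 1)) (bseq n l j (2*n - 1))
             = Some (bseq n l (j+1) 0))
  \<and> (\<forall>j\<ge>1. Bset n l j 0 = {ground l j})
  \<and> (\<forall>j\<ge>1. \<forall>a\<in>{1..n-1}. odd j \<longrightarrow>
        Bset n l j a = {b \<in> Bcrys n l. (\<forall>i. xs b i \<noteq> 0 \<longrightarrow> 2 \<le> i \<and> i \<le> a+1)
                                     \<and> x0 b = 0 \<and> (\<forall>i. xbs b i \<noteq> 0 \<longrightarrow> i = 1)})
  \<and> (\<forall>j\<ge>1. \<forall>a\<in>{1..n-1}. even j \<longrightarrow>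
        Bset n l j a = {b \<in> Bcrys n l. (\<forall>i. xs b i \<noteq> 0 \<longrightarrow> 1 \<le> i \<and> i \<le> a+1)
                                     \<and> x0 b = 0 \<and> (\<forall>i. xbs b i = 0)})
  \<and> (\<forall>j\<ge>1. \<forall>a\<in>{1..n-1}. odd j \<longrightarrow>
        Bset n l j (n + a - 1) = {b \<in> Bcrys n l. (\<forall>i. xs b i \<noteq> 0 \<longrightarrow> 2 \<le> i \<and> i \<le> n)
                     \<and> (\<forall>i. xbs b i \<noteq> 0 \<longrightarrow> (n - a + 1 \<le> i \<and> i \<le> n) \<or> i = 1)})
  \<and> (\<forall>j\<ge>1. \<forall>a\<in>{1..n-1}. even j \<longrightarrow>
        Bset n l j (n + a - 1) = {b \<in> Bcrys n l. (\<forall>i. xs b i \<noteq> 0 \<longrightarrow> 1 \<le> i \<and> i \<le> n)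
                     \<and> (\<forall>i. xbs b i \<noteq> 0 \<longrightarrow> n - a + 1 \<le> i \<and> i \<le> n)})
  \<and> (\<forall>j\<ge>1. bseq n l j 0 = ground l j)
  \<and> (\<forall>j\<ge>1. bseq n l j (2*n - 1) = ground l (j+1))
  \<and> (\<forall>j\<ge>1. \<forall>a\<in>{1..n-1}. bseq n l j a = Cr ((\<lambda>_. 0)(a+1 := int l)) 0 (\<lambda>_. 0))
  \<and> (\<forall>j\<ge>1. \<forall>a\<in>{1..n-1}. bseq n l j (n + a - 1) = Cr (\<lambda>_. 0) 0 ((\<lambda>_. 0)(n - a + 1 := int l)))"
proof (intro conjI allI impI ballI)
  fix j :: nat
  show "fpow n l (idx n (j+1) 1) (lam l (j+1) (idx n (j+1) 1)) (bseq n l j (2*n - 1))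
          = Some (bseq n l (j+1) 0)"
    using assms lam_idx_eq_0[of n 1 l "j+1"] bseq_last[of n l j] by simp
qed (use assms Bset_last bseq_last bseq_first_half bseq_second_half lam_le_veps_Bset
          Bset_first_half[OF assms(1)] Bset_second_half[OF assms(1)] bseq_extremal
      in \<open>auto simp: Let_def Bsupp_def ground_xsupp_def ground_xbsupp_def\<close>)

end
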